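(* For every substitution $\sigma$ and every freshness context $\nabla$: $\sigma$ respects $\nabla$ if and only if $\nabla\sigma\neq\bot$.
   Context: Nominal terms. Atoms $a,b,c,\dots$ and variables $X,Y,\dots$ are sorted; a permutation $\pi$ is a finite sequence of swappings $(a\,b)$ of same-sorted atoms, with inverse $\pi^{-1}$ the reversed sequence; nominal terms are $t::=f(t_1,\dots,t_n)\mid a\mid a.t\mid \pi\cdot X$, and $\pi\bullet t$ denotes the action of permutations on terms ($(a\,b)$ swaps $a$ and $b$ everywhere, including bound positions, and $(a\,b)\bullet(\pi\cdot X)=((a\,b)\pi)\cdot X$; sequences act right to left). A freshness context is a finite set of constraints $a\# X$. A substitution maps variables to terms of the same sort; $t\sigma$ is its application, which allows atom capture (e.g. $(a.X)\{X\mapsto a\}=a.a$) and satisfies $(\pi\cdot X)\sigma=\pi\bullet(X\sigma)$. $\mathrm{FA^{-s}}(t)$ is the set of atoms free in $t$ ignoring suspensions: $\mathrm{FA^{-s}}(f(t_1,\dots,t_n))=\bigcup_i\mathrm{FA^{-s}}(t_i)$, $\mathrm{FA^{-s}}(a)=\{a\}$, $\mathrm{FA^{-s}}(a.t)=\mathrm{FA^{-s}}(t)\setminus\{a\}$, $\mathrm{FA^{-s}}(\pi\cdot X)=\emptyset$. $\sigma$ respects $\nabla$ if for every variable $X$, $\mathrm{FA^{-s}}(X\sigma)\cap\{a\mid a\# X\in\nabla\}=\emptyset$. The algorithm ${\sf FC}$ on a finite set $F$ of formulas $a\# t$: starting from $F;\emptyset$, apply as long as possible: $\{a\# b\}\uplus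 F';\Delta\Rightarrow F';\Delta$ if $a\neq b$; $\{a\# a.t\}\uplus F';\Delta\Rightarrow F';\Delta$; $\{a\# b.t\}\uplus F';\Delta\Rightarrow\{a\# t\}\cup F';\Delta$ if $a\neq b$; $\{a\# f(t_1,\dots,t_n)\}\uplus F';\Delta\Rightarrow \{a\# t_1,\dots,a\# t_n\}\cup F';\Delta$; $\{a\#\pi\cdot X\}\uplus F';\Delta\Rightarrow F';\{\pi^{-1}\bullet a\# X\}\cup\Delta$. The terminal state is $\emptyset;\Delta$ (then ${\sf FC}(F)=\Delta$) or contains some $a\# a$ (then ${\sf FC}(F)=\bot$). For a freshness context $\nabla$ and substitution $\sigma$, $\nabla\sigma:={\sf FC}(\{a\# X\sigma\mid a\# X\in\nabla\})$. *)

theory Defs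
  imports Main
begin

text \<open>Atoms have type 'a, variables type 'v, function symbols type 'f.
  A permutation is a list of swappings; the list [s1,...,sn] denotes s1 s2 ... sn,
  acting right to left.\<close>

type_synonym 'a perm = "('a \<times> 'a) list"

datatype ('f, 'a, 'v) trm =
    Fn 'f "('f, 'a, 'v) trm list"
  | At 'a
  | Abs 'a "('f, 'a, 'v) trm"
  | Susp "'a perm" 'v

definition swap_atom :: "'a \<times> 'a \<Rightarrow> 'a \<Rightarrow> 'a" where
  "swap_atom s c = (if c = fst s then snd s else if c = snd s then fst s else c)"

fun perm_atom :: "'a perm \<Rightarrow> 'a \<Rightarrow> 'a" where
  "perm_atom [] c = c"
| "perm_atom (s # p) c = swap_atom s (perm_atom p c)"

definition perm_inv :: "'a perm \<Rightarrow> 'a perm" where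
  "perm_inv p = rev p"

fun perm_trm :: "'a perm \<Rightarrow> ('f, 'a, 'v) trm \<Rightarrow> ('f, 'a, 'v) trm" where
  "perm_trm p (Fn f ts) = Fn f (map (perm_trm p) ts)"
| "perm_trm p (At a) = At (perm_atom p a)"
| "perm_trm p (Abs a t) = Abs (perm_atom p a) (perm_trm p t)"
| "perm_trm p (Susp q X) = Susp (p @ q) X"

text \<open>Substitutions (capture-allowing application).\<close>
type_synonym ('f, 'a, 'v) subst = "'v \<Rightarrow> ('f, 'a, 'v) trm"

fun subst_trm :: "('f, 'a, 'v) subst \<Rightarrow> ('f, 'a, 'v) trm \<Rightarrow> ('f, 'a, 'v) trm" where
  "subst_trm \<sigma> (Fn f ts) = Fn f (map (subst_trm \<sigma>) ts)"
| "subst_trm \<sigma> (At a) = At a"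
| "subst_trm \<sigma> (Abs a t) = Abs a (subst_trm \<sigma> t)"
| "subst_trm \<sigma> (Susp p X) = perm_trm p (\<sigma> X)"

fun FA_s :: "('f, 'a, 'v) trm \<Rightarrow> 'a set" where
  "FA_s (Fn f ts) = (\<Union>t \<in> set ts. FA_s t)"
| "FA_s (At a) = {a}"
| "FA_s (Abs a t) = FA_s t - {a}"
| "FA_s (Susp p X) = {}"

text \<open>A freshness context is a finite set of constraints a # X, encoded as pairs (a, X).\<close>
definition respects_ctx :: "('f, 'a, 'v) subst \<Rightarrow> ('a \<times> 'v) set \<Rightarrow> bool" where
  "respects_ctx \<sigma> Nab \<longleftrightarrow> (\<forall>X. FA_s (\<sigma> X) \<inter> {a. (a, X) \<in> Nab} = {})"

text \<open>States F;Delta: F a set of freshness formulas a # t (pairs (a,t)),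
  Delta a set of constraints a # X.\<close>
type_synonym ('f, 'a, 'v) fc_state = "('a \<times> ('f, 'a, 'v) trm) set \<times> ('a \<times> 'v) set"

inductive fc_step :: "('f, 'a, 'v) fc_state \<Rightarrow> ('f, 'a, 'v) fc_state \<Rightarrow> bool" where
  atom: "(a, At b) \<in> F \<Longrightarrow> a \<noteq> b \<Longrightarrow> fc_step (F, \<Delta>) (F - {(a, At b)}, \<Delta>)"
| abs_same: "(a, Abs a t) \<in> F \<Longrightarrow> fc_step (F, \<Delta>) (F - {(a, Abs a t)}, \<Delta>)"
| abs_diff: "(a, Abs b t) \<in> F \<Longrightarrow> a \<noteq> b \<Longrightarrow>
      fc_step (F, \<Delta>) (insert (a, t) (F - {(a, Abs b t)}), \<Delta>)"
| fn: "(a, Fn f ts) \<in> F \<Longrightarrow>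
      fc_step (F, \<Delta>) ((F - {(a, Fn f ts)}) \<union> {(a, t) | t. t \<in> set ts}, \<Delta>)"
| susp: "(a, Susp p X) \<in> F \<Longrightarrow>
      fc_step (F, \<Delta>) (F - {(a, Susp p X)}, insert (perm_atom (perm_inv p) a, X) \<Delta>)"

definition fc_terminal :: "('f, 'a, 'v) fc_state \<Rightarrow> bool" where
  "fc_terminal S \<longleftrightarrow> (\<nexists>S'. fc_step S S')"

text \<open>Result of FC: Some Delta if the terminal state is emptyset;Delta, None (= bottom) if
  the terminal state still contains formulas (necessarily of the form a # a).\<close>
definition FC :: "('a \<times> ('f, 'a, 'v) trm) set \<Rightarrow> ('a \<times> 'v) set option" where
  "FC F = (THE r. \<exists>S. fc_step\<^sup>*\<^sup>* (F, {}) S \<and> fc_terminal S \<and>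
                       r = (if fst S = {} then Some (snd S) else None))"

definition ctx_subst :: "('a \<times> 'v) set \<Rightarrow> ('f, 'a, 'v) subst \<Rightarrow> ('a \<times> 'v) set option" where
  "ctx_subst Nab \<sigma> = FC {(a, \<sigma> X) | a X. (a, X) \<in> Nab}"

end

theory Submission
  imports Defs
begin

text \<open>Each step of FC replaces one formula \<open>a # t\<close> by finitely many smaller ones and moves
  suspension constraints into \<open>\<Delta>\<close>. Two quantities are therefore invariant: whether some formula
  \<open>a # t\<close> has \<open>a \<in> FA\<^sup>-\<^sup>s(t)\<close>, and the union of \<open>\<Delta>\<close> with the constraints \<open>\<pi>\<^sup>-\<^sup>1\<bullet>a # X\<close> still
  hidden in the suspensions of the pending formulas. The total size of the pending terms
  decreases, so a terminal state is reached, and in a terminal state only formulas \<open>a # a\<close>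
  remain. Hence FC is well defined and fails exactly when some atom is free in its term; for
  the formulas \<open>a # X\<sigma>\<close> with \<open>a # X \<in> \<nabla>\<close> this is the failure of \<open>\<sigma>\<close> to respect \<open>\<nabla>\<close>.\<close>

fun fresh_constraints :: "'a \<Rightarrow> ('f, 'a, 'v) trm \<Rightarrow> ('a \<times> 'v) set" where
  "fresh_constraints a (Fn f ts) = (\<Union>t \<in> set ts. fresh_constraints a t)"
| "fresh_constraints a (At b) = {}"
| "fresh_constraints a (Abs b t) = (if a = b then {} else fresh_constraints a t)"
| "fresh_constraints a (Susp p X) = {(perm_atom (perm_inv p) a, X)}"

definition fc_constraints :: "('a \<times> ('f, 'a, 'v) trm) set \<Rightarrow> ('a \<times> 'v) set" where
  "fc_constraints F = (\<Union>(a, t) \<in> F. fresh_constraints a t)"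

definition fc_clash :: "('a \<times> ('f, 'a, 'v) trm) set \<Rightarrow> bool" where
  "fc_clash F \<longleftrightarrow> (\<exists>(a, t) \<in> F. a \<in> FA_s t)"

definition fc_weight :: "('a \<times> ('f, 'a, 'v) trm) set \<Rightarrow> nat" where
  "fc_weight F = (\<Sum>(a, t) \<in> F. size t)"

lemma sum_set_le_sum_list: "sum (f :: 'b \<Rightarrow> nat) (set xs) \<le> sum_list (map f xs)"
  by (induction xs) (auto simp: sum.insert_if)

lemma fc_clash_simps [simp]:
  "\<not> fc_clash {}"
  "fc_clash (insert (a, t) F) \<longleftrightarrow> a \<in> FA_s t \<or> fc_clash F"
  "fc_clash (F \<union> G) \<longleftrightarrow> fc_clash F \<or> fc_clash G"
  unfolding fc_clash_def by blast+

lemma fc_constraints_simps [simp]: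
  "fc_constraints {} = {}"
  "fc_constraints (insert (a, t) F) = fresh_constraints a t \<union> fc_constraints F"
  "fc_constraints (F \<union> G) = fc_constraints F \<union> fc_constraints G"
  unfolding fc_constraints_def by blast+

lemma fc_step_replaces_formula:
  assumes "fc_step (F, \<Delta>) (F', \<Delta>')"
  obtains a t R D where "(a, t) \<in> F" "F' = F - {(a, t)} \<union> R" "\<Delta>' = \<Delta> \<union> D"
    "fc_clash R \<longleftrightarrow> a \<in> FA_s t" "fc_constraints R \<union> D = fresh_constraints a t"
    "finite R" "fc_weight R < size t"
  using assms
proof cases
  case (atom a b)
  then show ?thesis
    by (intro that[of a "At b" "{}" "{}"]) (auto simp: fc_weight_def)
next
  case (abs_same a t)
  then show ?thesis
    by (intro that[of a "Abs a t" "{}" "{}"]) (auto simp: fc_weight_def)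
next
  case (abs_diff a b t)
  then show ?thesis
    by (intro that[of a "Abs b t" "{(a, t)}" "{}"]) (auto simp: fc_weight_def)
next
  case (fn a f ts)
  have R: "{(a, t) | t. t \<in> set ts} = Pair a ` set ts" by auto
  have "fc_weight (Pair a ` set ts) = sum size (set ts)"
    unfolding fc_weight_def by (simp add: sum.reindex inj_on_def)
  also have "\<dots> \<le> sum_list (map size ts)" by (rule sum_set_le_sum_list)
  also have "\<dots> < size (Fn f ts)" by (simp add: size_list_conv_sum_list)
  finally show ?thesis using fn unfolding R
    by (intro that[of a "Fn f ts" "Pair a ` set ts" "{}"])
      (auto simp: fc_clash_def fc_constraints_def)
next
  case (susp a p X)
  then show ?thesis
    by (intro that[of a "Susp p X" "{}" "{(perm_atom (perm_inv p) a, X)}"]) (auto simp: fc_weight_def)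
qed

lemma fc_step_invariant:
  assumes "fc_step (F, \<Delta>) (F', \<Delta>')"
  shows "fc_clash F' \<longleftrightarrow> fc_clash F"
    and "\<Delta>' \<union> fc_constraints F' = \<Delta> \<union> fc_constraints F"
proof -
  obtain a t R D where at: "(a, t) \<in> F" and F': "F' = F - {(a, t)} \<union> R"
    and \<Delta>': "\<Delta>' = \<Delta> \<union> D" and clash: "fc_clash R \<longleftrightarrow> a \<in> FA_s t"
    and constraints: "fc_constraints R \<union> D = fresh_constraints a t"
    using assms by (rule fc_step_replaces_formula)
  define G where "G = F - {(a, t)}"
  have F: "F = insert (a, t) G" and F'G: "F' = G \<union> R"
    using at F' unfolding G_def by blast+
  show "fc_clash F' \<longleftrightarrow> fc_clash F"
    using clash by (auto simp: F F'G)
  show "\<Delta>' \<union> fc_constraints F' = \<Delta> \<union> fc_constraints F"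
    using constraints by (auto simp: F F'G \<Delta>')
qed

lemma fc_steps_invariant:
  assumes "fc_step\<^sup>*\<^sup>* S S'"
  shows "fc_clash (fst S') \<longleftrightarrow> fc_clash (fst S)"
    and "snd S' \<union> fc_constraints (fst S') = snd S \<union> fc_constraints (fst S)"
  using assms
proof (induction rule: rtranclp_induct)
  case (step S' S'')
  then show "fc_clash (fst S'') \<longleftrightarrow> fc_clash (fst S)"
    and "snd S'' \<union> fc_constraints (fst S'') = snd S \<union> fc_constraints (fst S)"
    using fc_step_invariant[of "fst S'" "snd S'" "fst S''" "snd S''"] by simp_all
qed simp_all

lemma fc_step_weight_less:
  assumes "fc_step (F, \<Delta>) (F', \<Delta>')" and "finite F"
  shows "finite F'" and "fc_weight F' < fc_weight F"
proof -
  obtain a t R where at: "(a, t) \<in> F" and F': "F' = F - {(a, t)} \<union> R"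
    and "finite R" and R: "fc_weight R < size t"
    using assms(1) by (rule fc_step_replaces_formula)
  then show "finite F'" using assms(2) by simp
  have "fc_weight F' \<le> fc_weight (F - {(a, t)}) + fc_weight R"
    unfolding F' fc_weight_def using assms(2) \<open>finite R\<close> by (simp add: sum_Un_nat)
  also have "\<dots> < fc_weight (F - {(a, t)}) + size t" using R by simp
  also have "\<dots> = fc_weight F" unfolding fc_weight_def using assms(2) at by (simp add: sum.remove)
  finally show "fc_weight F' < fc_weight F" .
qed

lemma fc_terminal_formula:
  assumes "fc_terminal (F, \<Delta>)" and "(a, t) \<in> F"
  shows "t = At a"
proof (cases t)
  case (Fn f ts)
  then show ?thesis using assms fc_step.fn[of a f ts F \<Delta>] by (auto simp: fc_terminal_def)
next
  case (At b)
  then show ?thesis using assms fc_step.atom[of a b F \<Delta>] by (auto simp: fc_terminal_def)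
next
  case (Abs b u)
  then show ?thesis using assms fc_step.abs_diff[of a b u F \<Delta>] fc_step.abs_same[of a u F \<Delta>]
    by (cases "a = b") (auto simp: fc_terminal_def)
next
  case (Susp p X)
  then show ?thesis using assms fc_step.susp[of a p X F \<Delta>] by (auto simp: fc_terminal_def)
qed

lemma fc_terminates:
  "finite F \<Longrightarrow> \<exists>S. fc_step\<^sup>*\<^sup>* (F, \<Delta>) S \<and> fc_terminal S"
proof (induction "fc_weight F" arbitrary: F \<Delta> rule: less_induct)
  case less
  show ?case
  proof (cases "fc_terminal (F, \<Delta>)")
    case False
    then obtain F' \<Delta>' where step: "fc_step (F, \<Delta>) (F', \<Delta>')" unfolding fc_terminal_def by auto
    have "finite F'" "fc_weight F' < fc_weight F" using fc_step_weight_less[OF step less.prems] by auto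
    with less.hyps obtain S where "fc_step\<^sup>*\<^sup>* (F', \<Delta>') S" "fc_terminal S" by blast
    with step show ?thesis by (meson converse_rtranclp_into_rtranclp)
  qed blast
qed

lemma fc_terminal_result:
  assumes "fc_step\<^sup>*\<^sup>* (F, {}) S" and "fc_terminal S"
  shows "(if fst S = {} then Some (snd S) else None)
    = (if fc_clash F then None else Some (fc_constraints F))"
proof -
  have "\<forall>(a, u) \<in> fst S. u = At a"
    using fc_terminal_formula[of "fst S" "snd S"] assms(2) by auto
  then have "fc_clash (fst S) \<longleftrightarrow> fst S \<noteq> {}" and "fc_constraints (fst S) = {}"
    unfolding fc_clash_def fc_constraints_def by fastforce+
  then show ?thesis using fc_steps_invariant[OF assms(1)] by auto
qed

lemma FC_eq:
  assumes "finite F"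
  shows "FC F = (if fc_clash F then None else Some (fc_constraints F))"
  unfolding FC_def
proof (rule the_equality)
  obtain S where "fc_step\<^sup>*\<^sup>* (F, {}) S" "fc_terminal S"
    using fc_terminates[OF assms] by blast
  then show "\<exists>S. fc_step\<^sup>*\<^sup>* (F, {}) S \<and> fc_terminal S \<and>
      (if fc_clash F then None else Some (fc_constraints F)) = (if fst S = {} then Some (snd S) else None)"
    using fc_terminal_result by metis
qed (use fc_terminal_result in blast)

theorem lemma1:
  fixes \<sigma> :: "('f, 'a, 'v) subst" and Nab :: "('a \<times> 'v) set"
  assumes "finite Nab"
  shows "respects_ctx \<sigma> Nab \<longleftrightarrow> ctx_subst Nab \<sigma> \<noteq> None"
proof -
  let ?F = "{(a, \<sigma> X) | a X. (a, X) \<in> Nab}"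
  have "?F = (\<lambda>(a, X). (a, \<sigma> X)) ` Nab" by auto
  then have "finite ?F" using assms by simp
  moreover have "respects_ctx \<sigma> Nab \<longleftrightarrow> \<not> fc_clash ?F"
    unfolding respects_ctx_def fc_clash_def by blast
  ultimately show ?thesis unfolding ctx_subst_def by (simp add: FC_eq)
qed

end
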